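(* If $f(z,w)$ is a rational function which is bounded and analytic on the bidisk $\mathbb{D}^2=\{(z,w)\in\mathbb{C}^2:|z|,|w|<1\}$, then the partial derivatives $\partial f/\partial z$ and $\partial f/\partial w$ belong to the Hardy space $H^1(\mathbb{D}^2)$.
   Context: For $\mathfrak{p}\in(0,\infty]$, $H^{\mathfrak{p}}(\mathbb{D}^2)$ is the space of analytic $f:\mathbb{D}^2\to\mathbb{C}$ with $\sup_{0<r<1}\|f_r\|_{L^{\mathfrak{p}}(\mathbb{T}^2)}<\infty$, where $f_r(z,w)=f(rz,rw)$ and $\mathbb{T}^2=\{|z|=|w|=1\}$ carries normalized Lebesgue measure. *)

theory Defs
  imports "HOL-Analysis.Analysis"
begin

definition bidisk_pt :: "complex \<Rightarrow> complex \<Rightarrow> bool" where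
  "bidisk_pt z w \<longleftrightarrow> norm z < 1 \<and> norm w < 1"

text \<open>Analytic on the bidisk: continuous and holomorphic in each variable separately
  (equivalent to joint holomorphy by Osgood's lemma).\<close>
definition analytic_bidisk :: "(complex \<Rightarrow> complex \<Rightarrow> complex) \<Rightarrow> bool" where
  "analytic_bidisk f \<longleftrightarrow>
     continuous_on {p :: complex \<times> complex. bidisk_pt (fst p) (snd p)} (\<lambda>p. f (fst p) (snd p)) \<and>
     (\<forall>z w. bidisk_pt z w \<longrightarrow>
        (\<lambda>u. f u w) field_differentiable (at z) \<and> (\<lambda>v. f z v) field_differentiable (at w))"

definition poly2 :: "(nat \<Rightarrow> nat \<Rightarrow> complex) \<Rightarrow> nat \<Rightarrow> complex \<Rightarrow> complex \<Rightarrow> complex" where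
  "poly2 c n z w = (\<Sum>i\<le>n. \<Sum>j\<le>n. c i j * z ^ i * w ^ j)"

definition rational_on_bidisk :: "(complex \<Rightarrow> complex \<Rightarrow> complex) \<Rightarrow> bool" where
  "rational_on_bidisk f \<longleftrightarrow>
     (\<exists>cp cq n. (\<exists>i\<le>n. \<exists>j\<le>n. cq i j \<noteq> 0) \<and>
        (\<forall>z w. bidisk_pt z w \<and> poly2 cq n z w \<noteq> 0 \<longrightarrow>
            f z w = poly2 cp n z w / poly2 cq n z w))"

definition bounded_bidisk :: "(complex \<Rightarrow> complex \<Rightarrow> complex) \<Rightarrow> bool" where
  "bounded_bidisk f \<longleftrightarrow> (\<exists>B. \<forall>z w. bidisk_pt z w \<longrightarrow> norm (f z w) \<le> B)"

definition torus_Lp_r :: "real \<Rightarrow> (complex \<Rightarrow> complex \<Rightarrow> complex) \<Rightarrow> real \<Rightarrow> ennreal" where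
  "torus_Lp_r p f r =
     ennreal (1 / (4 * pi\<^sup>2)) *
     (\<integral>\<^sup>+ x. ennreal (norm (f (r * cis (fst x)) (r * cis (snd x))) powr p)
            * indicator ({0..2*pi} \<times> {0..2*pi}) x \<partial>(lborel \<Otimes>\<^sub>M lborel))"

definition hardy_bidisk :: "real \<Rightarrow> (complex \<Rightarrow> complex \<Rightarrow> complex) \<Rightarrow> bool" where
  "hardy_bidisk p f \<longleftrightarrow> analytic_bidisk f \<and> (SUP r\<in>{0<..<1}. torus_Lp_r p f r) < \<infinity>"

end

theory Submission
  imports Defs "HOL-Complex_Analysis.Complex_Analysis" "HOL-Computational_Algebra.Polynomial"
begin

text \<open>
  For all but finitely many \<open>w\<close> on each circle \<open>|w| = r\<close>, the slice \<open>g = f(\<cdot>, w)\<close> is a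
  rational function \<open>P/Q\<close> of degree at most \<open>n\<close> with \<open>|g| \<le> M\<close> on the disc. The derivative of
  \<open>s \<mapsto> Re g(r e\<^sup>i\<^sup>s)\<close> is \<open>Re (g'(r e\<^sup>i\<^sup>s) i r e\<^sup>i\<^sup>s)\<close>; multiplied by a suitable power of \<open>e\<^sup>i\<^sup>s\<close>
  its vanishing becomes the vanishing of a polynomial in \<open>e\<^sup>i\<^sup>s\<close> of degree \<open>O(n)\<close>. A function
  bounded by \<open>M\<close> whose derivative has at most \<open>N\<close> zeros has total variation at most \<open>2M(N+1)\<close>,
  so applying this to \<open>g\<close> and \<open>-i g\<close> gives \<open>\<integral>|g'(r e\<^sup>i\<^sup>s)| ds = O(M n / r)\<close>, uniformly in
  \<open>w\<close>; for small \<open>r\<close> the Cauchy estimate suffices. Integrating over \<open>w\<close> (Tonelli) bounds the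
  \<open>L\<^sup>1\<close> norms of \<open>\<partial>f/\<partial>z\<close> on the tori uniformly in \<open>r\<close>. That \<open>\<partial>f/\<partial>z\<close> is again analytic on the
  bidisc follows from Cauchy estimates, which make the difference quotients in \<open>z\<close> converge
  uniformly in \<open>w\<close>. The case of \<open>\<partial>f/\<partial>w\<close> follows by exchanging the variables.
\<close>

section \<open>Total variation and critical points\<close>

lemma nonvanishing_imp_constant_sign:
  fixes g :: "real \<Rightarrow> real"
  assumes cont: "continuous_on {a<..<b} g" and nz: "\<forall>x\<in>{a<..<b}. g x \<noteq> 0"
  shows "(\<forall>x\<in>{a<..<b}. g x > 0) \<or> (\<forall>x\<in>{a<..<b}. g x < 0)"
proof (rule ccontr)
  assume "\<not> ?thesis"
  then obtain x y where x: "x \<in> {a<..<b}" "g x \<le> 0" and y: "y \<in> {a<..<b}" "g y \<ge> 0"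
    by (meson not_less)
  have sub: "{min x y..max x y} \<subseteq> {a<..<b}" using x y by auto
  then have cmn: "continuous_on {min x y..max x y} g" using cont continuous_on_subset by blast
  have "\<exists>z. min x y \<le> z \<and> z \<le> max x y \<and> g z = 0"
  proof (cases "x \<le> y")
    case True
    then show ?thesis using IVT'[of g x 0 y] x y cmn by auto
  next
    case False
    then show ?thesis using IVT2'[of g x 0 y] x y cmn by auto
  qed
  then show False using sub nz by auto
qed

lemma integral_abs_deriv_le_if_no_critical_point:
  fixes u u' :: "real \<Rightarrow> real"
  assumes der: "\<And>x. (u has_real_derivative u' x) (at x)" and cont: "continuous_on UNIV u'"
    and bd: "\<And>x. \<bar>u x\<bar> \<le> M" and ab: "a \<le> b" and nz: "\<forall>x\<in>{a<..<b}. u' x \<noteq> 0"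
  shows "integral {a..b} (\<lambda>x. \<bar>u' x\<bar>) \<le> 2 * M"
proof -
  obtain \<sigma> :: real where \<sigma>: "\<bar>\<sigma>\<bar> = 1" "\<And>x. x \<in> {a<..<b} \<Longrightarrow> \<bar>u' x\<bar> = \<sigma> * u' x"
    using nonvanishing_imp_constant_sign[OF continuous_on_subset[OF cont subset_UNIV] nz]
  proof (elim disjE)
    assume "\<forall>x\<in>{a<..<b}. u' x > 0"
    then show thesis using that[of 1] by force
  next
    assume "\<forall>x\<in>{a<..<b}. u' x < 0"
    then show thesis using that[of "-1"] by force
  qed
  have ftc: "(u' has_integral (u b - u a)) {a..b}"
    by (rule fundamental_theorem_of_calculus[OF ab])
       (auto intro!: has_field_derivative_at_within der
             simp: has_real_derivative_iff_has_vector_derivative[symmetric])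
  have "((\<lambda>x. \<bar>u' x\<bar>) has_integral \<sigma> * (u b - u a)) {a..b}"
    by (rule has_integral_spike_finite[OF _ _ has_integral_mult_right[OF ftc], of "{a,b}"]) (auto simp: \<sigma>)
  then have "integral {a..b} (\<lambda>x. \<bar>u' x\<bar>) = \<sigma> * (u b - u a)"
    by (rule integral_unique)
  also have "\<dots> \<le> \<bar>u b\<bar> + \<bar>u a\<bar>"
    using \<sigma>(1) by (metis abs_mult abs_triangle_ineq4 abs_ge_self mult_1 order_trans)
  also have "\<dots> \<le> 2 * M" using bd[of a] bd[of b] by linarith
  finally show ?thesis .
qed

lemma integral_abs_deriv_le_card_critical_points:
  fixes u u' :: "real \<Rightarrow> real"
  assumes der: "\<And>x. (u has_real_derivative u' x) (at x)" and cont: "continuous_on UNIV u'"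
    and bd: "\<And>x. \<bar>u x\<bar> \<le> M"
  shows "a \<le> b \<Longrightarrow> finite {x\<in>{a<..<b}. u' x = 0} \<Longrightarrow> card {x\<in>{a<..<b}. u' x = 0} \<le> N
     \<Longrightarrow> integral {a..b} (\<lambda>x. \<bar>u' x\<bar>) \<le> 2 * M * (N + 1)"
proof (induction N arbitrary: a b rule: less_induct)
  case (less N)
  have M0: "0 \<le> M" using bd[of 0] by auto
  let ?Z = "{x\<in>{a<..<b}. u' x = 0}"
  show ?case
  proof (cases "?Z = {}")
    case True
    then have "integral {a..b} (\<lambda>x. \<bar>u' x\<bar>) \<le> 2 * M"
      by (intro integral_abs_deriv_le_if_no_critical_point[OF der cont bd less.prems(1)]) auto
    also have "\<dots> \<le> 2 * M * (N + 1)" using M0 by (simp add: algebra_simps)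
    finally show ?thesis .
  next
    case False
    then obtain c where c: "c \<in> ?Z" by blast
    let ?Z1 = "{x\<in>{a<..<c}. u' x = 0}" and ?Z2 = "{x\<in>{c<..<b}. u' x = 0}"
    have sub: "?Z1 \<union> ?Z2 \<subseteq> ?Z - {c}" using c by auto
    have fin: "finite ?Z1" "finite ?Z2" using sub less.prems(2) by (auto intro: finite_subset)
    have "card ?Z1 + card ?Z2 = card (?Z1 \<union> ?Z2)" using fin by (intro card_Un_disjoint[symmetric]) auto
    also have "\<dots> \<le> card (?Z - {c})" using sub less.prems(2) by (intro card_mono) auto
    also have "\<dots> = card ?Z - 1" using c less.prems(2) by simp
    finally have cs: "card ?Z1 + card ?Z2 + 1 \<le> N"
      using c less.prems(2,3) card_0_eq[of ?Z] by fastforce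
    have ac: "a \<le> c" "c \<le> b" using c by auto
    have "integral {a..b} (\<lambda>x. \<bar>u' x\<bar>) = integral {a..c} (\<lambda>x. \<bar>u' x\<bar>) + integral {c..b} (\<lambda>x. \<bar>u' x\<bar>)"
      by (intro Henstock_Kurzweil_Integration.integral_combine[OF ac, symmetric]
            integrable_continuous_interval continuous_intros continuous_on_subset[OF cont]) auto
    also have "\<dots> \<le> 2 * M * (card ?Z1 + 1) + 2 * M * (card ?Z2 + 1)"
      using less.IH[OF _ ac(1) fin(1) order_refl] less.IH[OF _ ac(2) fin(2) order_refl] cs
      by (simp add: add_mono)
    also have "\<dots> = 2 * M * (real (card ?Z1 + card ?Z2 + 1) + 1)" by (simp add: algebra_simps)
    also have "\<dots> \<le> 2 * M * (N + 1)" using cs M0 by (intro mult_left_mono) auto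
    finally show ?thesis .
  qed
qed

section \<open>Critical points of a rational function along a circle\<close>

lemma inj_on_cis: "inj_on cis {0..<2*pi}"
proof (rule inj_onI)
  fix s t assume s: "s \<in> {0..<2*pi}" and t: "t \<in> {0..<2*pi}" and e: "cis s = cis t"
  have "cis (s - t) = 1" using e by (simp add: cis_divide[symmetric])
  then have "cos (s - t) = 1" by (metis cis.sel(1) one_complex.sel(1))
  then obtain k :: int where k: "s - t = real_of_int k * 2 * pi" using cos_one_2pi_int by blast
  have "\<bar>s - t\<bar> < 2 * pi" using s t by auto
  then have "\<bar>real_of_int k\<bar> * (2 * pi) < 1 * (2 * pi)" using k by (simp add: abs_mult)
  then have "\<bar>real_of_int k\<bar> < 1" by (simp add: mult_less_cancel_right_pos)
  then have "k = 0" by linarith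
  then show "s = t" using k by simp
qed

lemma finite_card_roots_on_circle:
  fixes p :: "complex poly"
  assumes p: "p \<noteq> 0" and c: "c \<noteq> 0" and S: "S \<subseteq> {0..<2*pi}"
  shows "finite {s\<in>S. poly p (c * cis s) = 0}"
    and "card {s\<in>S. poly p (c * cis s) = 0} \<le> degree p"
proof -
  let ?Z = "{s\<in>S. poly p (c * cis s) = 0}"
  have inj: "inj_on (\<lambda>s. c * cis s) ?Z"
  proof (rule inj_onI)
    fix a b assume "a \<in> ?Z" "b \<in> ?Z" "c * cis a = c * cis b"
    then show "a = b" using c S inj_onD[OF inj_on_cis, of a b] by (auto simp: subset_iff)
  qed
  have sub: "(\<lambda>s. c * cis s) ` ?Z \<subseteq> {x. poly p x = 0}" by auto
  show "finite ?Z" using inj_on_finite[OF inj sub poly_roots_finite[OF p]] .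
  have "card ?Z \<le> card {x. poly p x = 0}" using card_inj_on_le[OF inj sub poly_roots_finite[OF p]] .
  also have "\<dots> \<le> degree p" by (rule card_poly_roots_bound[OF p])
  finally show "card ?Z \<le> degree p" .
qed

lemma cnj_eq_inverse_if_norm_eq_1:
  fixes x :: complex assumes "norm x = 1" shows "cnj x = inverse x"
proof -
  have "x * cnj x = 1" using complex_norm_square[of x] assms by simp
  then show ?thesis by (metis inverse_unique)
qed

lemma poly_reflect_poly_map_cnj:
  fixes x :: complex assumes "norm x = 1"
  shows "poly (reflect_poly (map_poly cnj p)) x = x ^ degree p * cnj (poly p x)"
proof -
  have "degree (map_poly cnj p) = degree p" by (rule degree_map_poly) auto
  moreover have "cnj (inverse x) = x"
    using cnj_eq_inverse_if_norm_eq_1[OF assms] by (metis complex_cnj_cnj complex_cnj_inverse)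
  moreover have "x \<noteq> 0" using assms by auto
  ultimately show ?thesis by (simp add: poly_reflect_poly_nz)
qed

text \<open>
  On the unit circle \<open>cnj x = 1/x\<close>, so \<open>2 Re z = z + cnj z\<close> for \<open>z = a x / q\<^sup>2\<close> with polynomial
  \<open>a, q\<close> becomes a Laurent polynomial in \<open>x\<close>; reflected conjugate polynomials clear denominators.
\<close>
lemma Re_poly_quotient_on_circle_zeros:
  fixes A Q :: "complex poly" and r :: real
  assumes r: "r \<noteq> 0"
  obtains W where "degree W \<le> 2 * degree A + 4 * degree Q + 2"
    and "\<And>x. norm x = 1 \<Longrightarrow> poly Q x \<noteq> 0 \<Longrightarrow>
           Re (poly A x / (poly Q x)\<^sup>2 * (\<i> * r * x)) = 0 \<longleftrightarrow> poly W x = 0"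
proof -
  define dA dQ where "dA = degree A" and "dQ = degree Q"
  define RA RQ where "RA = reflect_poly (map_poly cnj A)" and "RQ = reflect_poly (map_poly cnj Q)"
  define W where "W = monom 1 (dA + 2) * A * RQ\<^sup>2 - monom 1 (2 * dQ) * RA * Q\<^sup>2"
  have dR: "degree RA \<le> dA" "degree RQ \<le> dQ"
    using degree_reflect_poly_le[of "map_poly cnj A"] degree_reflect_poly_le[of "map_poly cnj Q"]
    by (simp_all add: RA_def RQ_def dA_def dQ_def degree_map_poly)
  have "degree (monom (1::complex) (dA + 2) * A * RQ\<^sup>2) \<le> (dA + 2) + dA + 2 * dQ"
    using degree_mult_le[of "monom (1::complex) (dA + 2) * A" "RQ\<^sup>2"]
      degree_mult_le[of "monom (1::complex) (dA + 2)" A] degree_monom_le[of "1::complex" "dA + 2"]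
      degree_power_le[of RQ 2] dR unfolding dA_def by linarith
  moreover have "degree (monom (1::complex) (2 * dQ) * RA * Q\<^sup>2) \<le> 2 * dQ + dA + 2 * dQ"
    using degree_mult_le[of "monom (1::complex) (2 * dQ) * RA" "Q\<^sup>2"]
      degree_mult_le[of "monom (1::complex) (2 * dQ)" RA] degree_monom_le[of "1::complex" "2 * dQ"]
      degree_power_le[of Q 2] dR unfolding dQ_def by linarith
  ultimately have "degree W \<le> 2 * degree A + 4 * degree Q + 2"
    unfolding W_def dA_def dQ_def
    using degree_diff_le_max[of "monom 1 (degree A + 2) * A * RQ\<^sup>2" "monom 1 (2 * degree Q) * RA * Q\<^sup>2"]
    by linarith
  moreover have "Re (poly A x / (poly Q x)\<^sup>2 * (\<i> * r * x)) = 0 \<longleftrightarrow> poly W x = 0"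
    if x: "norm x = 1" and q: "poly Q x \<noteq> 0" for x
  proof -
    let ?a = "poly A x" and ?q = "poly Q x"
    let ?z = "?a / ?q\<^sup>2 * (\<i> * r * x)" and ?k = "\<i> * r / (?q\<^sup>2 * (x^dQ * cnj ?q)\<^sup>2 * x^(dA+1))"
    have x0: "x \<noteq> 0" and cq: "cnj ?q \<noteq> 0" using x q by auto
    have "complex_of_real (2 * Re ?z) = ?z + cnj ?z" by (simp only: complex_add_cnj)
    also have "\<dots> = (x^(dA+2) * ?a * (x^dQ * cnj ?q)\<^sup>2 - x^(2*dQ) * (x^dA * cnj ?a) * ?q\<^sup>2) * ?k"
      using x0 q cq by (simp add: cnj_eq_inverse_if_norm_eq_1[OF x] field_simps power_add
                                power_mult_distrib power_mult)
    also have "\<dots> = poly W x * ?k"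
      by (simp add: W_def RA_def RQ_def dA_def dQ_def poly_reflect_poly_map_cnj[OF x] poly_monom)
    finally have "complex_of_real (2 * Re ?z) = poly W x * ?k" .
    moreover have "?k \<noteq> 0" using x0 q r by simp
    ultimately show ?thesis by (metis mult_eq_0_iff of_real_eq_0_iff zero_neq_numeral)
  qed
  ultimately show thesis by (rule that)
qed

lemma deriv_poly_quotient:
  fixes P Q :: "complex poly"
  assumes S: "open S" "z \<in> S" and q: "poly Q z \<noteq> 0"
    and eq: "\<And>z. z \<in> S \<Longrightarrow> poly Q z \<noteq> 0 \<Longrightarrow> g z = poly P z / poly Q z"
  shows "deriv g z = poly (pderiv P * Q - P * pderiv Q) z / (poly Q z)\<^sup>2"
proof -
  have "open (S \<inter> {z. poly Q z \<noteq> 0})" by (intro open_Int S open_Collect_neq continuous_intros)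
  moreover have "((\<lambda>z. poly P z / poly Q z) has_field_derivative
      (poly (pderiv P) z * poly Q z - poly P z * poly (pderiv Q) z) / (poly Q z * poly Q z)) (at z)"
    by (intro DERIV_divide poly_DERIV q)
  ultimately have "(g has_field_derivative
      (poly (pderiv P) z * poly Q z - poly P z * poly (pderiv Q) z) / (poly Q z * poly Q z)) (at z)"
    by (elim has_field_derivative_transform_within_open[rotated]) (use S q eq in auto)
  then show ?thesis by (simp add: DERIV_imp_deriv power2_eq_square)
qed

lemma Re_tangential_deriv_zeros:
  fixes g :: "complex \<Rightarrow> complex" and P Q :: "complex poly" and r :: real
  assumes eq: "\<And>z. norm z < 1 \<Longrightarrow> poly Q z \<noteq> 0 \<Longrightarrow> g z = poly P z / poly Q z"
    and Q0: "Q \<noteq> 0" and dP: "degree P \<le> n" and dQ: "degree Q \<le> n" and r0: "0 < r" and r1: "r < 1"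
  defines "Z \<equiv> {s\<in>{0<..<2*pi}. Re (deriv g (r * cis s) * (\<i> * r * cis s)) = 0}"
  shows "finite Z \<and> card Z \<le> 9 * n + 2 \<or> (\<exists>E. finite E \<and> {0<..<2*pi} - E \<subseteq> Z)"
proof -
  define c where "c = complex_of_real r"
  have c0: "c \<noteq> 0" using r0 by (simp add: c_def)
  define A where "A = pderiv P * Q - P * pderiv Q"
  have "degree (pderiv P * Q) \<le> 2 * n" "degree (P * pderiv Q) \<le> 2 * n"
    using degree_mult_le[of "pderiv P" Q] degree_mult_le[of P "pderiv Q"]
      degree_pderiv[of P] degree_pderiv[of Q] dP dQ by linarith+
  then have dA: "degree A \<le> 2 * n"
    unfolding A_def using degree_diff_le_max[of "pderiv P * Q" "P * pderiv Q"] by linarith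
  define Ar Qr where "Ar = pcompose A [:0, c:]" and "Qr = pcompose Q [:0, c:]"
  have pAr: "poly Ar x = poly A (c * x)" and pQr: "poly Qr x = poly Q (c * x)" for x
    by (simp_all add: Ar_def Qr_def poly_pcompose mult.commute)
  have dAr: "degree Ar \<le> 2 * n" and dQr: "degree Qr \<le> n"
    using degree_pcompose_le[of A "[:0,c:]"] degree_pcompose_le[of Q "[:0,c:]"] dA dQ c0
    by (simp_all add: Ar_def Qr_def)
  obtain W where dW: "degree W \<le> 2 * degree Ar + 4 * degree Qr + 2"
    and W: "\<And>x. norm x = 1 \<Longrightarrow> poly Qr x \<noteq> 0 \<Longrightarrow>
              Re (poly Ar x / (poly Qr x)\<^sup>2 * (\<i> * r * x)) = 0 \<longleftrightarrow> poly W x = 0"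
    using Re_poly_quotient_on_circle_zeros[of r] r0 by auto
  have key: "s \<in> Z \<longleftrightarrow> poly W (1 * cis s) = 0"
    if s: "s \<in> {0<..<2*pi}" and q: "poly Q (c * cis s) \<noteq> 0" for s
  proof -
    have "norm (c * cis s) < 1" using r0 r1 by (simp add: c_def norm_mult)
    then have d: "deriv g (c * cis s) = poly Ar (cis s) / (poly Qr (cis s))\<^sup>2"
      using deriv_poly_quotient[of "ball 0 1" "c * cis s" Q g P] q eq by (simp add: pAr pQr A_def)
    have "poly Qr (cis s) \<noteq> 0" using q by (simp add: pQr)
    from W[OF norm_cis this]
    have "Re (deriv g (c * cis s) * (\<i> * r * cis s)) = 0 \<longleftrightarrow> poly W (cis s) = 0"
      by (simp only: d)
    then show ?thesis using s by (simp add: Z_def c_def)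
  qed
  have "{0<..<2*pi} \<subseteq> {0..<2*pi}" by auto
  note roots = finite_card_roots_on_circle[OF _ _ this]
  define Z1 where "Z1 = {s\<in>{0<..<2*pi}. poly Q (c * cis s) = 0}"
  have fin1: "finite Z1" using roots(1)[OF Q0 c0] unfolding Z1_def .
  have card1: "card Z1 \<le> n" using roots(2)[OF Q0 c0] dQ unfolding Z1_def by linarith
  show ?thesis
  proof (cases "W = 0")
    case True
    have "{0<..<2*pi} - Z1 \<subseteq> Z"
    proof
      fix s assume "s \<in> {0<..<2*pi} - Z1"
      then show "s \<in> Z" using key[of s] True by (simp add: Z1_def)
    qed
    then show ?thesis using fin1 by blast
  next
    case False
    define Z2 where "Z2 = {s\<in>{0<..<2*pi}. poly W (1 * cis s) = 0}"
    have fin2: "finite Z2" using roots(1)[OF False one_neq_zero] unfolding Z2_def .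
    have card2: "card Z2 \<le> 8 * n + 2"
      using roots(2)[OF False one_neq_zero] dW dAr dQr unfolding Z2_def by linarith
    have sub: "Z \<subseteq> Z1 \<union> Z2" using key by (auto simp: Z_def Z1_def Z2_def)
    then have "finite Z" using fin1 fin2 by (meson finite_UnI finite_subset)
    moreover have "card Z \<le> card Z1 + card Z2"
      using card_mono[OF finite_UnI[OF fin1 fin2] sub] card_Un_le[of Z1 Z2] by linarith
    ultimately show ?thesis using card1 card2 by auto
  qed
qed

section \<open>The \<open>L\<^sup>1\<close> norm of the derivative of a bounded rational function on circles\<close>

lemma has_real_derivative_Re_on_circle:
  fixes h :: "complex \<Rightarrow> complex" and r :: real
  assumes hol: "h holomorphic_on ball 0 1" and r0: "0 < r" and r1: "r < 1"
  shows "((\<lambda>s. Re (h (r * cis s))) has_real_derivative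
            Re (deriv h (r * cis s) * (\<i> * r * cis s))) (at s)"
proof -
  define H where "H = (\<lambda>z. h (of_real r * exp (\<i> * z)))"
  have inb: "of_real r * exp (\<i> * of_real s) \<in> ball (0::complex) 1"
    using r0 r1 by (simp add: norm_mult)
  have dh: "(h has_field_derivative deriv h (of_real r * exp (\<i> * of_real s)))
              (at (of_real r * exp (\<i> * of_real s)))"
    using holomorphic_on_imp_differentiable_at[OF hol _ inb] by (simp add: field_differentiable_derivI)
  have "(H has_field_derivative deriv h (of_real r * exp (\<i> * of_real s))
           * (of_real r * (exp (\<i> * of_real s) * \<i>))) (at (of_real s))"
    unfolding H_def
    by (rule DERIV_chain2[where f=h and g="\<lambda>z. of_real r * exp (\<i> * z)", OF dh])
       (auto intro!: derivative_eq_intros)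
  then have "((\<lambda>x. Re (H (of_real x))) has_field_derivative
      Re (deriv h (of_real r * exp (\<i> * of_real s)) * (of_real r * (exp (\<i> * of_real s) * \<i>)))) (at s)"
    by (intro has_field_derivative_Re has_vector_derivative_real_field)
  then show ?thesis by (simp add: H_def cis_conv_exp mult_ac)
qed

lemma integral_abs_Re_tangential_deriv_le:
  fixes h :: "complex \<Rightarrow> complex" and P Q :: "complex poly" and r :: real
  assumes hol: "h holomorphic_on ball 0 1" and bd: "\<And>z. norm z < 1 \<Longrightarrow> norm (h z) \<le> M"
    and eq: "\<And>z. norm z < 1 \<Longrightarrow> poly Q z \<noteq> 0 \<Longrightarrow> h z = poly P z / poly Q z"
    and Q0: "Q \<noteq> 0" and dP: "degree P \<le> n" and dQ: "degree Q \<le> n" and r0: "0 < r" and r1: "r < 1"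
  shows "integral {0..2*pi} (\<lambda>s. \<bar>Re (deriv h (r * cis s) * (\<i> * r * cis s))\<bar>) \<le> 2 * M * (9 * real n + 3)"
proof -
  define u' where "u' = (\<lambda>s. Re (deriv h (r * cis s) * (\<i> * r * cis s)))"
  have "norm (h 0) \<le> M" using bd[of 0] by simp
  then have M0: "0 \<le> M" using norm_ge_zero[of "h 0"] by linarith
  have inb: "complex_of_real r * cis s \<in> ball 0 1" for s
    using r0 r1 by (simp add: norm_mult)
  have cd: "continuous_on (ball 0 1) (deriv h)"
    by (intro holomorphic_on_imp_continuous_on holomorphic_deriv hol) auto
  have cont: "continuous_on UNIV u'"
    unfolding u'_def by (intro continuous_intros continuous_on_compose2[OF cd]) (use inb in auto)
  have ubd: "\<bar>Re (h (r * cis s))\<bar> \<le> M" for s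
    using bd inb abs_Re_le_cmod order_trans by (metis mem_ball_0)
  note bound = integral_abs_deriv_le_card_critical_points[OF
      has_real_derivative_Re_on_circle[OF hol r0 r1] cont[unfolded u'_def] ubd]
  from Re_tangential_deriv_zeros[OF eq Q0 dP dQ r0 r1]
  consider "finite {s\<in>{0<..<2*pi}. u' s = 0}" "card {s\<in>{0<..<2*pi}. u' s = 0} \<le> 9*n+2"
    | E where "finite E" "\<forall>s\<in>{0<..<2*pi}-E. u' s = 0"
    unfolding u'_def by blast
  then show ?thesis
  proof cases
    case 1
    then show ?thesis using bound[of 0 "2*pi" "9*n+2"] by (simp add: u'_def add.commute)
  next
    case 2
    have "((\<lambda>x. \<bar>u' x\<bar>) has_integral 0) {0..2*pi}"
      by (rule has_integral_spike_finite[OF _ _ has_integral_0, of "E \<union> {0, 2*pi}"]) (use 2 in auto)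
    then show ?thesis using M0 by (simp add: integral_unique u'_def)
  qed
qed

text \<open>Rotating \<open>g\<close> by \<open>-i\<close> turns the imaginary part of the tangential derivative
  into the real part.\<close>
lemma integral_norm_deriv_on_circle_le:
  fixes g :: "complex \<Rightarrow> complex" and P Q :: "complex poly" and r :: real
  assumes hol: "g holomorphic_on ball 0 1" and bd: "\<And>z. norm z < 1 \<Longrightarrow> norm (g z) \<le> M"
    and eq: "\<And>z. norm z < 1 \<Longrightarrow> poly Q z \<noteq> 0 \<Longrightarrow> g z = poly P z / poly Q z"
    and Q0: "Q \<noteq> 0" and dP: "degree P \<le> n" and dQ: "degree Q \<le> n" and r0: "0 < r" and r1: "r < 1"
  shows "integral {0..2*pi} (\<lambda>s. norm (deriv g (r * cis s))) \<le> 4 * M * (9 * real n + 3) / r"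
proof -
  define w where "w = (\<lambda>s. deriv g (r * cis s) * (\<i> * r * cis s))"
  have inb: "complex_of_real r * cis s \<in> ball 0 1" for s
    using r0 r1 by (simp add: norm_mult)
  have I1: "integral {0..2*pi} (\<lambda>s. \<bar>Re (w s)\<bar>) \<le> 2 * M * (9 * real n + 3)"
    using integral_abs_Re_tangential_deriv_le[OF hol bd eq Q0 dP dQ r0 r1] by (simp add: w_def)
  have I2: "integral {0..2*pi} (\<lambda>s. \<bar>Im (w s)\<bar>) \<le> 2 * M * (9 * real n + 3)"
  proof -
    have "deriv (\<lambda>z. - \<i> * g z) (r * cis s) = - \<i> * deriv g (r * cis s)" for s
      by (rule deriv_cmult) (rule holomorphic_on_imp_differentiable_at[OF hol _ inb], simp)
    then have "Re (deriv (\<lambda>z. - \<i> * g z) (r * cis s) * (\<i> * r * cis s)) = Im (w s)" for s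
      by (simp add: w_def)
    moreover have "integral {0..2*pi}
        (\<lambda>s. \<bar>Re (deriv (\<lambda>z. - \<i> * g z) (r * cis s) * (\<i> * r * cis s))\<bar>) \<le> 2 * M * (9 * real n + 3)"
      by (rule integral_abs_Re_tangential_deriv_le
            [where h="\<lambda>z. - \<i> * g z" and P="smult (- \<i>) P" and Q=Q and M=M and n=n])
         (use hol bd eq Q0 dP dQ r0 r1 in \<open>auto intro!: holomorphic_intros simp: norm_mult\<close>)
    ultimately show ?thesis by simp
  qed
  have cd: "continuous_on (ball 0 1) (deriv g)"
    by (intro holomorphic_on_imp_continuous_on holomorphic_deriv hol) auto
  have cw: "continuous_on UNIV w"
    unfolding w_def by (intro continuous_intros continuous_on_compose2[OF cd]) (use inb in auto)
  have int: "(\<lambda>s. \<bar>Re (w s)\<bar>) integrable_on {0..2*pi}" "(\<lambda>s. \<bar>Im (w s)\<bar>) integrable_on {0..2*pi}"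
    "(\<lambda>s. (1/r) * (\<bar>Re (w s)\<bar> + \<bar>Im (w s)\<bar>)) integrable_on {0..2*pi}"
    by (intro integrable_continuous_interval continuous_intros continuous_on_subset[OF cw subset_UNIV])+
  have int0: "(\<lambda>s. norm (deriv g (r * cis s))) integrable_on {0..2*pi}"
    by (intro integrable_continuous_interval continuous_intros continuous_on_compose2[OF cd])
       (use inb in auto)
  have pw: "norm (deriv g (r * cis s)) \<le> (1/r) * (\<bar>Re (w s)\<bar> + \<bar>Im (w s)\<bar>)" for s
  proof -
    have "norm (deriv g (r * cis s)) = norm (w s) / r" using r0 by (simp add: w_def norm_mult)
    also have "\<dots> \<le> (\<bar>Re (w s)\<bar> + \<bar>Im (w s)\<bar>) / r" using r0 cmod_le by (simp add: divide_right_mono)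
    finally show ?thesis by simp
  qed
  have "integral {0..2*pi} (\<lambda>s. norm (deriv g (r * cis s)))
        \<le> integral {0..2*pi} (\<lambda>s. (1/r) * (\<bar>Re (w s)\<bar> + \<bar>Im (w s)\<bar>))"
    by (rule integral_le[OF int0 int(3) pw])
  also have "\<dots> = (1/r) * (integral {0..2*pi} (\<lambda>s. \<bar>Re (w s)\<bar>) + integral {0..2*pi} (\<lambda>s. \<bar>Im (w s)\<bar>))"
    using int by (simp add: integral_add integral_mult[symmetric] integrable_add)
  also have "\<dots> \<le> (1/r) * (4 * M * (9 * real n + 3))"
    using I1 I2 r0 by (intro mult_left_mono) auto
  finally show ?thesis by simp
qed

section \<open>Cauchy estimates and the partial derivative\<close>

lemma norm_higher_deriv_le_Cauchy:
  fixes g :: "complex \<Rightarrow> complex"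
  assumes hol: "g holomorphic_on S" and bd: "\<And>z. z \<in> S \<Longrightarrow> norm (g z) \<le> M"
    and R: "0 < R" "cball t R \<subseteq> S"
  shows "norm ((deriv ^^ n) g t) \<le> fact n * M / R ^ n"
proof (rule Cauchy_inequality)
  show "g holomorphic_on ball t R" using hol R(2) ball_subset_cball by (blast intro: holomorphic_on_subset)
  show "continuous_on (cball t R) g"
    using holomorphic_on_imp_continuous_on[OF hol] R(2) continuous_on_subset by blast
  show "0 < R" by (rule R)
  fix x assume "norm (t - x) = R"
  then show "norm (g x) \<le> M" using R(2) bd by (auto simp: dist_norm)
qed

lemma norm_deriv_diff_le:
  fixes g :: "complex \<Rightarrow> complex"
  assumes hol: "g holomorphic_on S" and S: "open S" and bd: "\<And>z. z \<in> S \<Longrightarrow> norm (g z) \<le> M"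
    and R: "0 < R" "cball z0 (2 * R) \<subseteq> S" and t: "t \<in> cball z0 R"
  shows "norm (deriv g t - deriv g z0) \<le> 2 * M / R\<^sup>2 * norm (t - z0)"
proof (rule field_differentiable_bound[of "cball z0 R" "deriv g" "deriv (deriv g)"])
  fix x assume x: "x \<in> cball z0 R"
  then have "cball x R \<subseteq> cball z0 (2 * R)" by (simp add: cball_subset_cball_iff dist_commute)
  then have "cball x R \<subseteq> S" using R(2) by blast
  then show "norm (deriv (deriv g) x) \<le> 2 * M / R\<^sup>2"
    using norm_higher_deriv_le_Cauchy[OF hol bd R(1), of x 2] by (simp add: numeral_2_eq_2)
  have "x \<in> S" using x R by (auto simp: subset_iff)
  then show "(deriv g has_field_derivative deriv (deriv g) x) (at x within cball z0 R)"
    using holomorphic_deriv[OF hol S] S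
    by (auto intro: field_differentiable_derivI has_field_derivative_at_within
             holomorphic_on_imp_differentiable_at)
qed (use R t in auto)

lemma norm_difference_quotient_minus_deriv_le:
  fixes g :: "complex \<Rightarrow> complex"
  assumes hol: "g holomorphic_on S" and S: "open S" and bd: "\<And>z. z \<in> S \<Longrightarrow> norm (g z) \<le> M"
    and R: "0 < R" "cball z0 (2 * R) \<subseteq> S" and h: "h \<noteq> 0" "norm h \<le> R"
  shows "norm ((g (z0 + h) - g z0) / h - deriv g z0) \<le> 2 * M / R\<^sup>2 * norm h"
proof -
  let ?I = "closed_segment z0 (z0 + h)"
  have "z0 \<in> S" using R by auto
  then have M0: "0 \<le> M" using bd norm_ge_zero order_trans by blast
  have seg: "?I \<subseteq> cball z0 R"
    using h(2) R(1) by (intro closed_segment_subset) (auto simp: dist_norm)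
  have "norm ((g (z0 + h) - (z0 + h) * deriv g z0) - (g z0 - z0 * deriv g z0))
        \<le> (2 * M / R\<^sup>2 * norm h) * norm ((z0 + h) - z0)"
  proof (rule field_differentiable_bound[of ?I _ "\<lambda>x. deriv g x - deriv g z0"])
    fix x assume x: "x \<in> ?I"
    then have "x \<in> S" using seg R by (auto simp: subset_iff)
    then have "((\<lambda>x. g x - x * deriv g z0) has_field_derivative deriv g x - 1 * deriv g z0) (at x)"
      using holomorphic_on_imp_differentiable_at[OF hol S]
      by (intro DERIV_diff DERIV_cmult_right DERIV_ident field_differentiable_derivI)
    then show "((\<lambda>x. g x - x * deriv g z0) has_field_derivative deriv g x - deriv g z0) (at x within ?I)"
      by (simp add: has_field_derivative_at_within)
    have "norm (x - z0) \<le> norm h"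
      using dist_in_closed_segment[OF x] by (simp add: dist_norm norm_minus_commute)
    then show "norm (deriv g x - deriv g z0) \<le> 2 * M / R\<^sup>2 * norm h"
      using norm_deriv_diff_le[OF hol S bd R, of x] x seg M0
      by (smt (verit) divide_nonneg_nonneg mult_left_mono subsetD zero_le_power2)
  qed auto
  also have "(g (z0 + h) - (z0 + h) * deriv g z0) - (g z0 - z0 * deriv g z0)
             = h * ((g (z0 + h) - g z0) / h - deriv g z0)"
    using h(1) by (simp add: field_simps)
  finally have "norm h * norm ((g (z0 + h) - g z0) / h - deriv g z0) \<le> norm h * (2 * M / R\<^sup>2 * norm h)"
    by (simp add: norm_mult mult_ac)
  then show ?thesis using h(1) by (subst (asm) mult_le_cancel_left_pos) auto
qed

lemma cball_quarter_gap_subset_unit_ball: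
  fixes z0 :: complex
  assumes "norm z0 < 1"
  shows "0 < (1 - norm z0) / 4" and "cball z0 (2 * ((1 - norm z0) / 4)) \<subseteq> ball 0 1"
proof -
  show "0 < (1 - norm z0) / 4" using assms by simp
  show "cball z0 (2 * ((1 - norm z0) / 4)) \<subseteq> ball 0 1"
    by (subst cball_subset_ball_iff) (use assms in \<open>simp add: dist_norm field_simps\<close>)
qed

lemma analytic_bidisk_holomorphic_slices:
  assumes "analytic_bidisk f"
  shows "\<And>w. norm w < 1 \<Longrightarrow> (\<lambda>u. f u w) holomorphic_on ball 0 1"
    and "\<And>z. norm z < 1 \<Longrightarrow> (\<lambda>v. f z v) holomorphic_on ball 0 1"
  using assms unfolding analytic_bidisk_def bidisk_pt_def holomorphic_on_def
  by (auto intro: field_differentiable_at_within)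

locale bounded_separately_holomorphic =
  fixes f :: "complex \<Rightarrow> complex \<Rightarrow> complex" and M :: real
  assumes holomorphic_fst: "\<And>w. norm w < 1 \<Longrightarrow> (\<lambda>u. f u w) holomorphic_on ball 0 1"
    and holomorphic_snd: "\<And>z. norm z < 1 \<Longrightarrow> (\<lambda>v. f z v) holomorphic_on ball 0 1"
    and bounded: "\<And>z w. norm z < 1 \<Longrightarrow> norm w < 1 \<Longrightarrow> norm (f z w) \<le> M"
begin

lemma bound_nonneg: "0 \<le> M"
  using bounded[of 0 0] norm_ge_zero[of "f 0 0"] by (simp del: norm_ge_zero)

lemma norm_partial_deriv_diff_le:
  assumes z0: "norm z0 < 1" and w: "norm w < 1" and z: "norm (z - z0) \<le> (1 - norm z0) / 4"
  shows "norm (deriv (\<lambda>u. f u w) z - deriv (\<lambda>u. f u w) z0)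
           \<le> 2 * M / ((1 - norm z0) / 4)\<^sup>2 * norm (z - z0)"
  using norm_deriv_diff_le[OF holomorphic_fst[OF w] open_ball _ cball_quarter_gap_subset_unit_ball[OF z0]]
    bounded w z
  by (auto simp: dist_norm norm_minus_commute)

text \<open>The difference quotients in \<open>z\<close> converge to \<open>\<partial>f/\<partial>z\<close> uniformly in \<open>w\<close>, by the Cauchy estimate.\<close>
lemma holomorphic_on_partial_deriv_snd:
  assumes z0: "norm z0 < 1"
  shows "(\<lambda>v. deriv (\<lambda>u. f u v) z0) holomorphic_on ball 0 1"
proof (rule holomorphic_uniform_sequence[OF open_ball])
  define R where "R = (1 - norm z0) / 4"
  have R: "0 < R" "cball z0 (2 * R) \<subseteq> ball 0 1"
    using cball_quarter_gap_subset_unit_ball[OF z0] by (simp_all add: R_def)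
  define h where "h n = complex_of_real (R / Suc n)" for n
  have norm_h: "norm (h n) = R / real (Suc n)" for n
    unfolding h_def norm_of_real using R(1) by simp
  have "norm (h n) > 0" "norm (h n) \<le> R" for n
    using R(1) by (simp_all add: norm_h field_simps)
  then have h: "h n \<noteq> 0" "norm (h n) \<le> R" for n
    by auto
  have "z0 + h n \<in> cball z0 (2 * R)" for n
    using h(2)[of n] R(1) by (simp add: dist_norm)
  then have "z0 + h n \<in> ball 0 1" for n
    using R(2) by blast
  then show "(\<lambda>v. (f (z0 + h n) v - f z0 v) / h n) holomorphic_on ball 0 1" for n
    using z0 h(1) by (intro holomorphic_intros holomorphic_snd) auto
  have lim: "(\<lambda>n. 2 * M / R\<^sup>2 * (R / real (Suc n))) \<longlonglongrightarrow> 0"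
    by (intro tendsto_mult_right_zero LIMSEQ_Suc[OF lim_const_over_n])
  have ul: "uniform_limit (ball 0 1) (\<lambda>n v. (f (z0 + h n) v - f z0 v) / h n)
              (\<lambda>v. deriv (\<lambda>u. f u v) z0) sequentially"
  proof (rule uniform_limitI)
    fix e :: real assume "0 < e"
    from order_tendstoD(2)[OF lim this]
    show "\<forall>\<^sub>F n in sequentially. \<forall>v\<in>ball 0 1.
            dist ((f (z0 + h n) v - f z0 v) / h n) (deriv (\<lambda>u. f u v) z0) < e"
    proof (rule eventually_mono, intro ballI)
      fix n and v :: complex assume n: "2 * M / R\<^sup>2 * (R / real (Suc n)) < e" and v: "v \<in> ball 0 1"
      have "norm ((f (z0 + h n) v - f z0 v) / h n - deriv (\<lambda>u. f u v) z0) \<le> 2 * M / R\<^sup>2 * norm (h n)"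
        using norm_difference_quotient_minus_deriv_le[OF holomorphic_fst open_ball _ R h] bounded v
        by auto
      also have "norm (h n) = R / real (Suc n)" by (rule norm_h)
      finally show "dist ((f (z0 + h n) v - f z0 v) / h n) (deriv (\<lambda>u. f u v) z0) < e"
        using n by (simp add: dist_norm)
    qed
  qed
  show "\<exists>d>0. cball x d \<subseteq> ball 0 1 \<and> uniform_limit (cball x d)
               (\<lambda>n v. (f (z0 + h n) v - f z0 v) / h n) (\<lambda>v. deriv (\<lambda>u. f u v) z0) sequentially"
    if x: "x \<in> ball 0 1" for x :: complex
  proof (intro exI conjI)
    show "0 < (1 - norm x) / 2" using x by simp
    show sub: "cball x ((1 - norm x) / 2) \<subseteq> ball 0 1"
      by (subst cball_subset_ball_iff) (use x in \<open>simp add: dist_norm field_simps\<close>)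
    show "uniform_limit (cball x ((1 - norm x) / 2)) (\<lambda>n v. (f (z0 + h n) v - f z0 v) / h n)
            (\<lambda>v. deriv (\<lambda>u. f u v) z0) sequentially"
      by (rule uniform_limit_on_subset[OF ul sub])
  qed
qed

lemma continuous_on_partial_deriv_fst:
  "continuous_on {p. bidisk_pt (fst p) (snd p)} (\<lambda>p. deriv (\<lambda>u. f u (snd p)) (fst p))"
  unfolding continuous_on_iff
proof (intro ballI allI impI)
  fix p :: "complex \<times> complex" and e :: real
  assume p: "p \<in> {p. bidisk_pt (fst p) (snd p)}" and e: "0 < e"
  obtain z0 w0 where pz: "p = (z0, w0)" by (cases p)
  have z0: "norm z0 < 1" and w0: "norm w0 < 1" using p pz by (auto simp: bidisk_pt_def)
  define R where "R = (1 - norm z0) / 4"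
  define K where "K = 2 * M / R\<^sup>2"
  have R0: "0 < R" using cball_quarter_gap_subset_unit_ball[OF z0] by (simp add: R_def)
  have K0: "0 \<le> K" using bound_nonneg by (simp add: K_def)
  have "continuous_on (ball 0 1) (\<lambda>v. deriv (\<lambda>u. f u v) z0)"
    by (rule holomorphic_on_imp_continuous_on[OF holomorphic_on_partial_deriv_snd[OF z0]])
  then obtain d1 where d1: "0 < d1" "\<And>w. w \<in> ball 0 1 \<Longrightarrow> dist w w0 < d1 \<Longrightarrow>
      dist (deriv (\<lambda>u. f u w) z0) (deriv (\<lambda>u. f u w0) z0) < e / 2"
    using w0 e unfolding continuous_on_iff by (metis half_gt_zero mem_ball_0)
  define d where "d = min d1 (min R (e / (2 * (K + 1))))"
  show "\<exists>d>0. \<forall>q\<in>{p. bidisk_pt (fst p) (snd p)}. dist q p < d \<longrightarrow>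
          dist (deriv (\<lambda>u. f u (snd q)) (fst q)) (deriv (\<lambda>u. f u (snd p)) (fst p)) < e"
  proof (intro exI conjI ballI impI)
    show "0 < d" using d1 R0 e K0 by (simp add: d_def)
    fix q :: "complex \<times> complex" assume q: "q \<in> {p. bidisk_pt (fst p) (snd p)}" and dq: "dist q p < d"
    obtain z w where qz: "q = (z, w)" by (cases q)
    have w: "norm w < 1" using q qz by (auto simp: bidisk_pt_def)
    have dz: "norm (z - z0) < d" and dw: "dist w w0 < d"
      using dq dist_fst_le[of q p] dist_snd_le[of q p] pz qz by (simp_all add: dist_norm)
    have "norm (deriv (\<lambda>u. f u w) z - deriv (\<lambda>u. f u w) z0) \<le> K * norm (z - z0)"
      using norm_partial_deriv_diff_le[OF z0 w] dz by (simp add: K_def R_def d_def)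
    also have "\<dots> \<le> K * (e / (2 * (K + 1)))"
      using dz K0 by (intro mult_left_mono) (auto simp: d_def)
    also have "\<dots> < e / 2"
    proof -
      have "K * (e / (2 * (K + 1))) = (e / 2) * (K / (K + 1))" by (simp add: field_simps)
      also have "\<dots> < (e / 2) * 1" using K0 e by (intro mult_strict_left_mono) auto
      finally show ?thesis by simp
    qed
    finally have "dist (deriv (\<lambda>u. f u w) z) (deriv (\<lambda>u. f u w) z0) < e / 2"
      by (simp add: dist_norm)
    moreover have "dist (deriv (\<lambda>u. f u w) z0) (deriv (\<lambda>u. f u w0) z0) < e / 2"
      using d1(2)[of w] w dw by (simp add: d_def)
    ultimately show "dist (deriv (\<lambda>u. f u (snd q)) (fst q)) (deriv (\<lambda>u. f u (snd p)) (fst p)) < e"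
      using dist_triangle[of "deriv (\<lambda>u. f u w) z" "deriv (\<lambda>u. f u w0) z0" "deriv (\<lambda>u. f u w) z0"]
        pz qz by simp
  qed
qed

end

lemma bounded_bidisk_imp_bounded_separately_holomorphic:
  assumes "analytic_bidisk f" "bounded_bidisk f"
  obtains M where "bounded_separately_holomorphic f M"
  using assms analytic_bidisk_holomorphic_slices[OF assms(1)]
  unfolding bounded_bidisk_def bounded_separately_holomorphic_def bidisk_pt_def by blast

lemma analytic_bidisk_partial_deriv_fst:
  assumes an: "analytic_bidisk f" and bdd: "bounded_bidisk f"
  shows "analytic_bidisk (\<lambda>z w. deriv (\<lambda>u. f u w) z)"
proof -
  obtain M where "bounded_separately_holomorphic f M"
    using bounded_bidisk_imp_bounded_separately_holomorphic[OF an bdd] .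
  then interpret bounded_separately_holomorphic f M .
  show ?thesis unfolding analytic_bidisk_def
  proof (intro conjI allI impI continuous_on_partial_deriv_fst)
    fix z w assume "bidisk_pt z w"
    then have z: "norm z < 1" and w: "norm w < 1" by (auto simp: bidisk_pt_def)
    have "deriv (\<lambda>u. f u w) holomorphic_on ball 0 1" by (intro holomorphic_deriv holomorphic_fst[OF w]) auto
    then show "(\<lambda>u. deriv (\<lambda>u. f u w) u) field_differentiable at z"
      using z by (intro holomorphic_on_imp_differentiable_at[of _ "ball 0 1"]) auto
    show "(\<lambda>v. deriv (\<lambda>u. f u v) z) field_differentiable at w"
      using holomorphic_on_partial_deriv_snd[OF z] w
      by (intro holomorphic_on_imp_differentiable_at[of _ "ball 0 1"]) auto
  qed
qed

section \<open>Integration over the torus\<close>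

definition torus_integrand :: "(complex \<Rightarrow> complex \<Rightarrow> complex) \<Rightarrow> real \<Rightarrow> real \<times> real \<Rightarrow> real" where
  "torus_integrand G r x = norm (G (r * cis (fst x)) (r * cis (snd x)))"

lemma torus_Lp_r_1_eq:
  "torus_Lp_r 1 G r = ennreal (1 / (4 * pi\<^sup>2)) *
     (\<integral>\<^sup>+ x. ennreal (torus_integrand G r x) * indicator ({0..2*pi} \<times> {0..2*pi}) x \<partial>(lborel \<Otimes>\<^sub>M lborel))"
  by (simp add: torus_Lp_r_def torus_integrand_def)

lemma continuous_on_torus_integrand:
  assumes contG: "continuous_on {p. bidisk_pt (fst p) (snd p)} (\<lambda>p. G (fst p) (snd p))"
    and r: "0 < r" "r < 1"
  shows "continuous_on UNIV (torus_integrand G r)"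
proof -
  have "(r * cis (fst x), r * cis (snd x)) \<in> {p. bidisk_pt (fst p) (snd p)}" for x :: "real \<times> real"
    using r by (simp add: bidisk_pt_def norm_mult)
  then show ?thesis
    unfolding torus_integrand_def
    by (intro continuous_intros continuous_on_compose2[OF contG,
          of UNIV "\<lambda>x. (r * cis (fst x), r * cis (snd x))", simplified]) auto
qed

lemma torus_integrand_measurable:
  assumes "continuous_on {p. bidisk_pt (fst p) (snd p)} (\<lambda>p. G (fst p) (snd p))" "0 < r" "r < 1"
  shows "(\<lambda>x. ennreal (torus_integrand G r x) * indicator ({0..2*pi} \<times> {0..2*pi}) x)
           \<in> borel_measurable (lborel \<Otimes>\<^sub>M lborel)"
proof -
  have [measurable]: "torus_integrand G r \<in> borel_measurable borel"
    by (rule borel_measurable_continuous_onI[OF continuous_on_torus_integrand[OF assms]])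
  have [measurable]: "{0..2*pi} \<times> {0..2*pi::real} \<in> sets borel"
    by (intro borel_closed closed_Times) auto
  show ?thesis unfolding lborel_prod measurable_lborel2 by measurable
qed

lemma torus_Lp_r_1_le:
  fixes G :: "complex \<Rightarrow> complex \<Rightarrow> complex" and r C :: real
  assumes contG: "continuous_on {p. bidisk_pt (fst p) (snd p)} (\<lambda>p. G (fst p) (snd p))"
    and r: "0 < r" "r < 1" and C0: "0 \<le> C" and Bad: "finite Bad"
    and inner: "\<And>b. b \<in> {0..2*pi} \<Longrightarrow> b \<notin> Bad \<Longrightarrow>
        integral {0..2*pi} (\<lambda>s. norm (G (r * cis s) (r * cis b))) \<le> C"
  shows "torus_Lp_r 1 G r \<le> ennreal (1 / (4 * pi\<^sup>2)) * ennreal (C * (2 * pi))"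
proof -
  define A where "A = {0..2*pi}"
  define h where "h = torus_integrand G r"
  define \<Phi> where "\<Phi> = (\<lambda>x. ennreal (h x) * indicator (A \<times> A) x)"
  have meas: "\<Phi> \<in> borel_measurable (lborel \<Otimes>\<^sub>M lborel)"
    using torus_integrand_measurable[OF contG r] by (simp add: \<Phi>_def h_def A_def)
  have hcont: "continuous_on UNIV (\<lambda>a. h (a, b))" for b
    unfolding h_def
    by (intro continuous_on_compose2[OF continuous_on_torus_integrand[OF contG r]] continuous_intros) auto
  have slice: "(\<integral>\<^sup>+ a. \<Phi> (a, b) \<partial>lborel) \<le> ennreal C * indicator A b" if b: "b \<notin> Bad" for b
  proof (cases "b \<in> A")
    case True
    have hi: "((\<lambda>a. h (a, b)) has_integral integral A (\<lambda>a. h (a, b))) A"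
      unfolding A_def
      by (intro integrable_integral integrable_continuous_interval continuous_on_subset[OF hcont]) auto
    have "(\<integral>\<^sup>+ a. ennreal (h (a, b)) * indicator A a \<partial>lborel) = ennreal (integral A (\<lambda>a. h (a, b)))"
      using nn_integral_has_integral_lebesgue'[OF _ hi] by (simp add: h_def torus_integrand_def)
    moreover have "(\<integral>\<^sup>+ a. \<Phi> (a, b) \<partial>lborel) = (\<integral>\<^sup>+ a. ennreal (h (a, b)) * indicator A a \<partial>lborel)"
      using True by (intro nn_integral_cong) (simp add: \<Phi>_def indicator_def)
    ultimately have "(\<integral>\<^sup>+ a. \<Phi> (a, b) \<partial>lborel) = ennreal (integral A (\<lambda>a. h (a, b)))"
      by simp
    also have "\<dots> \<le> ennreal C"
      using inner[of b] b True by (intro ennreal_leI) (simp add: A_def h_def torus_integrand_def)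
    finally show ?thesis using True by simp
  qed (simp add: \<Phi>_def)
  have "integral\<^sup>N (lborel \<Otimes>\<^sub>M lborel) \<Phi> = (\<integral>\<^sup>+ b. (\<integral>\<^sup>+ a. \<Phi> (a, b) \<partial>lborel) \<partial>lborel)"
    by (rule lborel_pair.nn_integral_snd[OF meas, symmetric])
  also have "\<dots> \<le> (\<integral>\<^sup>+ b. ennreal C * indicator A b \<partial>lborel)"
    by (intro nn_integral_mono_AE AE_I'[OF finite_imp_null_set_lborel[OF Bad]]) (use slice in blast)+
  also have "\<dots> = ennreal (C * (2 * pi))"
    using C0 by (simp add: nn_integral_cmult_indicator A_def ennreal_mult)
  finally show ?thesis
    unfolding torus_Lp_r_1_eq by (intro mult_left_mono) (simp_all add: \<Phi>_def h_def A_def)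
qed

section \<open>The partial derivative is in \<open>H\<^sup>1\<close>\<close>

definition poly_slice :: "(nat \<Rightarrow> nat \<Rightarrow> complex) \<Rightarrow> nat \<Rightarrow> complex \<Rightarrow> complex poly" where
  "poly_slice c n w = (\<Sum>i\<le>n. monom (\<Sum>j\<le>n. c i j * w^j) i)"

lemma poly_poly_slice: "poly (poly_slice c n w) z = poly2 c n z w"
  unfolding poly_slice_def poly2_def poly_sum poly_monom
  by (simp add: sum_distrib_left mult_ac)

lemma degree_poly_slice_le: "degree (poly_slice c n w) \<le> n"
  unfolding poly_slice_def by (rule degree_sum_le) (auto intro: order_trans[OF degree_monom_le])

lemma poly_slice_eq_0_imp_root:
  assumes "i0 \<le> n" "j0 \<le> n" "c i0 j0 \<noteq> 0"
  obtains C where "C \<noteq> 0" "\<And>w. poly_slice c n w = 0 \<Longrightarrow> poly C w = 0"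
proof
  define C where "C = (\<Sum>j\<le>n. monom (c i0 j) j)"
  have "coeff C j0 = c i0 j0" using assms by (simp add: C_def coeff_sum)
  then show "C \<noteq> 0" using assms by auto
  fix w assume "poly_slice c n w = 0"
  then have "coeff (poly_slice c n w) i0 = 0" by simp
  then show "poly C w = 0" using assms(1) by (simp add: poly_slice_def coeff_sum C_def poly_sum poly_monom)
qed

text \<open>For small radii the Cauchy estimate replaces the bound \<open>O(1/r)\<close>.\<close>
lemma integral_norm_deriv_on_circle_le_uniform:
  fixes g :: "complex \<Rightarrow> complex" and P Q :: "complex poly" and r :: real
  assumes hol: "g holomorphic_on ball 0 1" and bd: "\<And>z. norm z < 1 \<Longrightarrow> norm (g z) \<le> M"
    and eq: "\<And>z. norm z < 1 \<Longrightarrow> poly Q z \<noteq> 0 \<Longrightarrow> g z = poly P z / poly Q z"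
    and Q0: "Q \<noteq> 0" and dP: "degree P \<le> n" and dQ: "degree Q \<le> n" and r0: "0 < r" and r1: "r < 1"
  shows "integral {0..2*pi} (\<lambda>s. norm (deriv g (r * cis s))) \<le> 8 * M * (9 * real n + 3) + 8 * pi * M"
proof -
  have M0: "0 \<le> M" using bd[of 0] norm_ge_zero[of "g 0"] by (simp del: norm_ge_zero)
  show ?thesis
  proof (cases "r \<le> 1/2")
    case True
    have pw: "norm (deriv g (r * cis s)) \<le> 4 * M" for s
    proof -
      have "norm (r * cis s) + 1/4 < 1" using True r0 by (simp add: norm_mult)
      then have sub: "cball (r * cis s) (1/4) \<subseteq> ball 0 1"
        by (subst cball_subset_ball_iff) (simp add: dist_norm)
      have "norm ((deriv ^^ 1) g (r * cis s)) \<le> fact 1 * M / (1/4) ^ 1"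
        by (rule norm_higher_deriv_le_Cauchy[OF hol _ _ sub]) (use bd in auto)
      then show ?thesis by simp
    qed
    have cd: "continuous_on (ball 0 1) (deriv g)"
      by (intro holomorphic_on_imp_continuous_on holomorphic_deriv hol) auto
    have "(\<lambda>s. norm (deriv g (r * cis s))) integrable_on {0..2*pi}"
      by (intro integrable_continuous_interval continuous_intros continuous_on_compose2[OF cd])
         (use r0 r1 in \<open>auto simp: norm_mult\<close>)
    then have "integral {0..2*pi} (\<lambda>s. norm (deriv g (r * cis s))) \<le> integral {0..2*pi} (\<lambda>s. 4 * M)"
      by (rule integral_le) (simp_all add: pw integrable_const_ivl)
    also have "\<dots> = 8 * pi * M" by simp
    finally show ?thesis using M0 by (simp add: add_increasing)
  next
    case False
    have "integral {0..2*pi} (\<lambda>s. norm (deriv g (r * cis s))) \<le> 4 * M * (9 * real n + 3) / r"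
      by (rule integral_norm_deriv_on_circle_le[OF hol bd eq Q0 dP dQ r0 r1])
    also have "\<dots> \<le> 8 * M * (9 * real n + 3)"
    proof -
      have "4 * (M * (9 * real n + 3)) \<le> 8 * (M * (9 * real n + 3)) * r"
        using False M0 mult_left_mono[of "1/2" r "8 * (M * (9 * real n + 3))"] by simp
      then show ?thesis using r0 by (simp add: divide_le_eq mult_ac)
    qed
    moreover have "0 \<le> 8 * pi * M" using M0 by simp
    ultimately show ?thesis by linarith
  qed
qed

lemma hardy_bidisk_1_partial_deriv_fst:
  fixes f :: "complex \<Rightarrow> complex \<Rightarrow> complex"
  assumes rat: "rational_on_bidisk f" and an: "analytic_bidisk f" and bdd: "bounded_bidisk f"
  shows "hardy_bidisk 1 (\<lambda>z w. deriv (\<lambda>u. f u w) z)"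
proof -
  define F where "F = (\<lambda>z w. deriv (\<lambda>u. f u w) z)"
  have anF: "analytic_bidisk F" using analytic_bidisk_partial_deriv_fst[OF an bdd] by (simp add: F_def)
  then have contF: "continuous_on {p. bidisk_pt (fst p) (snd p)} (\<lambda>p. F (fst p) (snd p))"
    by (simp add: analytic_bidisk_def)
  obtain M where "bounded_separately_holomorphic f M"
    using bounded_bidisk_imp_bounded_separately_holomorphic[OF an bdd] .
  then interpret bounded_separately_holomorphic f M .
  obtain cp cq n where nz: "\<exists>i\<le>n. \<exists>j\<le>n. cq i j \<noteq> 0"
    and eq: "\<And>z w. bidisk_pt z w \<Longrightarrow> poly2 cq n z w \<noteq> 0 \<Longrightarrow> f z w = poly2 cp n z w / poly2 cq n z w"
    using rat unfolding rational_on_bidisk_def by blast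
  then obtain i0 j0 where ij: "i0 \<le> n" "j0 \<le> n" "cq i0 j0 \<noteq> 0" by blast
  obtain C0 where C0: "C0 \<noteq> 0" and root: "\<And>w. poly_slice cq n w = 0 \<Longrightarrow> poly C0 w = 0"
    using poly_slice_eq_0_imp_root[of i0 n j0 cq, OF ij] by blast
  define C where "C = 8 * M * (9 * real n + 3) + 8 * pi * M"
  have "torus_Lp_r 1 F r \<le> ennreal (1 / (4 * pi\<^sup>2)) * ennreal (C * (2 * pi))"
    if r: "0 < r" "r < 1" for r
  proof (rule torus_Lp_r_1_le[OF contF r])
    show "0 \<le> C" using bound_nonneg by (simp add: C_def)
    let ?Bad = "{2*pi} \<union> {b\<in>{0..<2*pi}. poly C0 (r * cis b) = 0}"
    show "finite ?Bad" using finite_card_roots_on_circle(1)[OF C0, of r "{0..<2*pi}"] r by simp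
    fix b assume b: "b \<in> {0..2*pi}" "b \<notin> ?Bad"
    have w: "norm (r * cis b) < 1" using r by (simp add: norm_mult)
    have "poly_slice cq n (r * cis b) \<noteq> 0" using b root by auto
    moreover have "f z (r * cis b) = poly (poly_slice cp n (r * cis b)) z / poly (poly_slice cq n (r * cis b)) z"
      if "norm z < 1" "poly (poly_slice cq n (r * cis b)) z \<noteq> 0" for z
      using eq that w by (simp add: poly_poly_slice bidisk_pt_def)
    ultimately show "integral {0..2*pi} (\<lambda>s. norm (F (r * cis s) (r * cis b))) \<le> C"
      unfolding F_def C_def
      using integral_norm_deriv_on_circle_le_uniform[OF holomorphic_fst[OF w] bounded[OF _ w] _ _
              degree_poly_slice_le degree_poly_slice_le r]
      by blast
  qed
  then have "(SUP r\<in>{0<..<1}. torus_Lp_r 1 F r) \<le> ennreal (1 / (4 * pi\<^sup>2)) * ennreal (C * (2 * pi))"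
    by (intro SUP_least) auto
  also have "\<dots> < \<infinity>" by (simp add: ennreal_mult_less_top)
  finally show ?thesis using anF unfolding hardy_bidisk_def F_def by simp
qed

section \<open>Exchanging the variables\<close>

lemma poly2_swap: "poly2 (\<lambda>i j. c j i) n z w = poly2 c n w z"
  unfolding poly2_def by (subst sum.swap) (intro sum.cong refl, simp only: mult_ac)

lemma rational_on_bidisk_swap:
  assumes "rational_on_bidisk f" shows "rational_on_bidisk (\<lambda>z w. f w z)"
proof -
  obtain cp cq n where nz: "\<exists>i\<le>n. \<exists>j\<le>n. cq i j \<noteq> 0"
    and eq: "\<And>z w. bidisk_pt z w \<Longrightarrow> poly2 cq n z w \<noteq> 0 \<Longrightarrow> f z w = poly2 cp n z w / poly2 cq n z w"
    using assms unfolding rational_on_bidisk_def by blast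
  have "\<exists>i\<le>n. \<exists>j\<le>n. cq j i \<noteq> 0" using nz by blast
  moreover have "f w z = poly2 (\<lambda>i j. cp j i) n z w / poly2 (\<lambda>i j. cq j i) n z w"
    if "bidisk_pt z w" "poly2 (\<lambda>i j. cq j i) n z w \<noteq> 0" for z w
    using eq[of w z] that unfolding poly2_swap[of cp] poly2_swap[of cq] by (simp add: bidisk_pt_def)
  ultimately show ?thesis unfolding rational_on_bidisk_def
    by (intro exI[of _ "\<lambda>i j. cp j i"] exI[of _ "\<lambda>i j. cq j i"] exI[of _ n]) simp
qed

lemma bounded_bidisk_swap:
  assumes "bounded_bidisk f" shows "bounded_bidisk (\<lambda>z w. f w z)"
  using assms unfolding bounded_bidisk_def bidisk_pt_def by (metis (full_types))

lemma analytic_bidisk_swap: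
  assumes "analytic_bidisk f" shows "analytic_bidisk (\<lambda>z w. f w z)"
proof -
  have c: "continuous_on {p. bidisk_pt (fst p) (snd p)} (\<lambda>p. f (fst p) (snd p))"
    and d: "\<And>z w. bidisk_pt z w \<Longrightarrow>
              (\<lambda>u. f u w) field_differentiable at z \<and> (\<lambda>v. f z v) field_differentiable at w"
    using assms unfolding analytic_bidisk_def by blast+
  have "continuous_on {p. bidisk_pt (fst p) (snd p)} (\<lambda>p. f (snd p) (fst p))"
    by (rule continuous_on_compose2[OF c, of _ "\<lambda>p. (snd p, fst p)", simplified])
       (auto intro!: continuous_intros simp: bidisk_pt_def)
  moreover have "bidisk_pt w z" if "bidisk_pt z w" for z w
    using that by (auto simp: bidisk_pt_def)
  ultimately show ?thesis using d unfolding analytic_bidisk_def by blast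
qed

lemma torus_Lp_r_1_swap:
  assumes contG: "continuous_on {p. bidisk_pt (fst p) (snd p)} (\<lambda>p. G (fst p) (snd p))"
    and r: "0 < r" "r < 1"
  shows "torus_Lp_r 1 (\<lambda>z w. G w z) r = torus_Lp_r 1 G r"
proof -
  define \<Phi> where "\<Phi> = (\<lambda>x. ennreal (torus_integrand G r x) * indicator ({0..2*pi} \<times> {0..2*pi}) x)"
  have meas: "\<Phi> \<in> borel_measurable (lborel \<Otimes>\<^sub>M lborel)"
    unfolding \<Phi>_def by (rule torus_integrand_measurable[OF contG r])
  have "torus_Lp_r 1 (\<lambda>z w. G w z) r
          = ennreal (1 / (4 * pi\<^sup>2)) * (\<integral>\<^sup>+ x. \<Phi> (snd x, fst x) \<partial>(lborel \<Otimes>\<^sub>M lborel))"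
    unfolding torus_Lp_r_1_eq \<Phi>_def
    by (intro arg_cong2[where f="(*)"] refl nn_integral_cong) (auto simp: torus_integrand_def indicator_def)
  also have "(\<integral>\<^sup>+ x. \<Phi> (snd x, fst x) \<partial>(lborel \<Otimes>\<^sub>M lborel)) = (\<integral>\<^sup>+ y. (\<integral>\<^sup>+ x. \<Phi> (y, x) \<partial>lborel) \<partial>lborel)"
    using meas by (subst lborel_pair.nn_integral_snd[symmetric]) simp_all
  also have "\<dots> = (\<integral>\<^sup>+ y. (\<integral>\<^sup>+ x. \<Phi> (x, y) \<partial>lborel) \<partial>lborel)"
    by (rule lborel_pair.Fubini[OF meas, symmetric])
  also have "\<dots> = integral\<^sup>N (lborel \<Otimes>\<^sub>M lborel) \<Phi>"
    by (rule lborel_pair.nn_integral_snd[OF meas])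
  finally show ?thesis unfolding torus_Lp_r_1_eq \<Phi>_def .
qed

lemma hardy_bidisk_1_swap:
  assumes "hardy_bidisk 1 G"
  shows "hardy_bidisk 1 (\<lambda>z w. G w z)"
proof -
  have an: "analytic_bidisk G" and fin: "(SUP r\<in>{0<..<1}. torus_Lp_r 1 G r) < \<infinity>"
    using assms by (auto simp: hardy_bidisk_def)
  have "continuous_on {p. bidisk_pt (fst p) (snd p)} (\<lambda>p. G (fst p) (snd p))"
    using an by (simp add: analytic_bidisk_def)
  then have "(SUP r\<in>{0<..<1}. torus_Lp_r 1 (\<lambda>z w. G w z) r) = (SUP r\<in>{0<..<1}. torus_Lp_r 1 G r)"
    by (intro SUP_cong refl torus_Lp_r_1_swap) auto
  then show ?thesis using analytic_bidisk_swap[OF an] fin by (simp add: hardy_bidisk_def)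
qed

theorem theorem1p5:
  fixes f :: "complex \<Rightarrow> complex \<Rightarrow> complex"
  assumes "rational_on_bidisk f"
    and "analytic_bidisk f"
    and "bounded_bidisk f"
  shows "hardy_bidisk 1 (\<lambda>z w. deriv (\<lambda>u. f u w) z) \<and>
         hardy_bidisk 1 (\<lambda>z w. deriv (\<lambda>v. f z v) w)"
proof
  show "hardy_bidisk 1 (\<lambda>z w. deriv (\<lambda>u. f u w) z)"
    by (rule hardy_bidisk_1_partial_deriv_fst[OF assms])
  have "hardy_bidisk 1 (\<lambda>z w. deriv (\<lambda>u. f w u) z)"
    by (rule hardy_bidisk_1_partial_deriv_fst[OF rational_on_bidisk_swap[OF assms(1)]
          analytic_bidisk_swap[OF assms(2)] bounded_bidisk_swap[OF assms(3)]])
  from hardy_bidisk_1_swap[OF this] show "hardy_bidisk 1 (\<lambda>z w. deriv (\<lambda>v. f z v) w)"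
    by simp
qed

end
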